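(* Let $X$ be a real random variable with $\mathbb{E}X^2<\infty$, $\mu=\mathbb{E}X$, and $\sigma^2=\operatorname{Var}(X)>0$. Let $(X_{k,n})_{1\le k\le n}$ be a triangular array of i.i.d. random variables distributed as $X$, and $S_{k,k}=\sum_{i=1}^kX_{i,k}$. Then, as $n\to\infty$, \[ \frac{1}{\sigma\sqrt{\log n}}\sum_{k=1}^n\left(\frac{S_{k,k}}{k}-\mu\right)\xrightarrow{d}\mathcal{N}, \] where $\mathcal{N}$ is a standard normal random variable.
   Context: $\xrightarrow{d}$ denotes convergence in distribution. *)

theory Defs
  imports "HOL-Probability.Probability"
begin

end

theory Submission
  imports Defs
begin

text \<open>
  Write \<open>m\<close>, \<open>\<sigma>\<^sup>2\<close> for the mean and variance of \<open>Y\<close> and \<open>c\<^sub>n = \<sigma> sqrt (ln n)\<close>.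
  The normalised statistic is \<open>S\<^sub>n = \<Sum>\<^sub>(i,k) (X i k - m) / (k c\<^sub>n)\<close>, a sum of independent
  terms indexed by the triangle \<open>1 \<le> i \<le> k \<le> n\<close>. Its characteristic function is therefore
  \<open>\<Prod>\<^sub>k=1..n \<phi>(u\<^sub>n / k)\<^sup>k\<close>, where \<open>\<phi>\<close> is the characteristic function of the centred law
  \<open>\<nu>\<close> of \<open>Y\<close> and \<open>u\<^sub>n = t / c\<^sub>n\<close>. Comparing every factor \<open>\<phi>(s)\<close> with \<open>exp (- s\<^sup>2 \<sigma>\<^sup>2 / 2)\<close>
  by a second-order Taylor estimate, the product differs from
  \<open>exp (- u\<^sub>n\<^sup>2 \<sigma>\<^sup>2 harm n / 2) = exp (- t\<^sup>2 / 2 \<cdot> harm n / ln n)\<close> by at most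
  \<open>u\<^sub>n\<^sup>2 harm n \<cdot> (R(u\<^sub>n) / 6 + u\<^sub>n\<^sup>2 \<sigma>\<^sup>4 / 4)\<close>, where the Taylor remainder \<open>R(s) \<rightarrow> 0\<close>
  as \<open>s \<rightarrow> 0\<close>; this tends to zero because \<open>u\<^sub>n\<^sup>2 harm n \<rightarrow> t\<^sup>2 / \<sigma>\<^sup>2\<close>. Hence the
  characteristic functions converge to \<open>exp (- t\<^sup>2 / 2)\<close> and Levy's continuity theorem gives
  the claim.
\<close>

definition triangle :: "nat \<Rightarrow> (nat \<times> nat) set" where
  "triangle n = {(i, k). 1 \<le> i \<and> i \<le> k \<and> k \<le> n}"

text \<open>The triangle is a dependent product with swapped coordinates; this lets sums and
  products over it be evaluated row by row.\<close>
lemma triangle_eq_swap_Sigma: "triangle n = prod.swap ` (SIGMA k:{1..n}. {1..k})"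
  by (auto simp: triangle_def image_iff)

lemma sum_triangle:
  "(\<Sum>p\<in>triangle n. f (fst p) (snd p)) = (\<Sum>k=1..n. \<Sum>i=1..k. f i k)"
  by (simp add: triangle_eq_swap_Sigma sum.reindex sum.Sigma case_prod_beta)

lemma prod_triangle:
  "(\<Prod>p\<in>triangle n. f (fst p) (snd p)) = (\<Prod>k=1..n. \<Prod>i=1..k. f i k)"
  by (simp add: triangle_eq_swap_Sigma prod.reindex prod.Sigma case_prod_beta)

lemma normalized_sum_triangle:
  fixes x :: "nat \<Rightarrow> nat \<Rightarrow> real"
  shows "(\<Sum>k=1..n. (\<Sum>i=1..k. x i k) / real k - m) / c
       = (\<Sum>p\<in>triangle n. (x (fst p) (snd p) - m) / (real (snd p) * c))"
proof -
  have row: "(\<Sum>i=1..k. (x i k - m) / (real k * c)) = ((\<Sum>i=1..k. x i k) / real k - m) / c"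
    if "1 \<le> k" for k
    using that by (simp add: sum_divide_distrib[symmetric] sum_subtractf field_simps)
  have "(\<Sum>p\<in>triangle n. (x (fst p) (snd p) - m) / (real (snd p) * c))
      = (\<Sum>k=1..n. \<Sum>i=1..k. (x i k - m) / (real k * c))"
    by (rule sum_triangle)
  also have "\<dots> = (\<Sum>k=1..n. ((\<Sum>i=1..k. x i k) / real k - m) / c)"
    by (rule sum.cong[OF refl], rule row) simp
  also have "\<dots> = (\<Sum>k=1..n. (\<Sum>i=1..k. x i k) / real k - m) / c"
    by (rule sum_divide_distrib[symmetric])
  finally show ?thesis ..
qed

lemma exp_minus_approx:
  fixes x :: real
  assumes "x \<ge> 0"
  shows "\<bar>(1 - x) - exp (- x)\<bar> \<le> x\<^sup>2"
proof -
  have "exp (- x) \<le> 1 / (1 + x)"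
    using exp_ge_add_one_self[of x] assms by (simp add: exp_minus field_simps)
  also have "\<dots> \<le> 1 - x + x\<^sup>2"
    using assms by (simp add: field_simps power2_eq_square)
  finally show ?thesis
    using exp_ge_add_one_self[of "- x"] by (simp add: abs_if)
qed

text \<open>The harmonic numbers grow like \<open>ln n\<close>; this is where the logarithmic
  normalisation comes from.\<close>
lemma harm_over_ln_tendsto: "(\<lambda>n. harm n / ln (real n) :: real) \<longlonglongrightarrow> 1"
proof -
  have ln_top: "filterlim (\<lambda>n. ln (real n)) at_top sequentially"
    by (rule filterlim_compose[OF ln_at_top filterlim_real_sequentially])
  have "(\<lambda>n. 1 + (harm n - ln (real n)) * inverse (ln (real n)) :: real) \<longlonglongrightarrow> 1 + euler_mascheroni * 0"
    by (intro tendsto_intros euler_mascheroni_LIMSEQ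
          filterlim_compose[OF tendsto_inverse_0_at_top ln_top] filterlim_ident)
  moreover have "\<forall>\<^sub>F n in sequentially.
      1 + (harm n - ln (real n)) * inverse (ln (real n)) = harm n / ln (real n)"
    by (rule eventually_sequentiallyI[of 2]) (simp add: field_simps)
  ultimately show ?thesis
    by (simp add: Lim_transform_eventually)
qed

lemma (in prob_space) centered_law_moments:
  assumes Y_rv: "random_variable borel Y"
    and Y_sq: "integrable M (\<lambda>\<omega>. (Y \<omega>)\<^sup>2)"
  defines "\<nu> \<equiv> distr M borel (\<lambda>\<omega>. Y \<omega> - expectation Y)"
  shows "real_distribution \<nu>"
    and "integrable \<nu> (\<lambda>x. x)" and "integrable \<nu> (\<lambda>x. x\<^sup>2)"
    and "(\<integral>x. x \<partial>\<nu>) = 0" and "(\<integral>x. x\<^sup>2 \<partial>\<nu>) = variance Y"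
proof -
  have Y_int: "integrable M Y"
    by (rule square_integrable_imp_integrable[OF Y_rv Y_sq])
  have Z_sq: "integrable M (\<lambda>\<omega>. (Y \<omega> - expectation Y)\<^sup>2)"
    unfolding power2_diff using Y_int Y_sq by auto
  show "real_distribution \<nu>"
    unfolding \<nu>_def using Y_rv by simp
  show "integrable \<nu> (\<lambda>x. x)" "integrable \<nu> (\<lambda>x. x\<^sup>2)"
    unfolding \<nu>_def using Y_rv Y_int Z_sq by (simp_all add: integrable_distr_eq)
  show "(\<integral>x. x \<partial>\<nu>) = 0" "(\<integral>x. x\<^sup>2 \<partial>\<nu>) = variance Y"
    unfolding \<nu>_def using Y_rv Y_int by (simp_all add: integral_distr prob_space)
qed

lemma (in prob_space) char_weighted_iid_sum:
  assumes indep: "indep_vars (\<lambda>_. borel) X I"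
    and Y_rv: "random_variable borel Y"
    and distr_eq: "\<And>i. i \<in> I \<Longrightarrow> distr M borel (X i) = distr M borel Y"
  shows "char (distr M borel (\<lambda>\<omega>. \<Sum>i\<in>I. (X i \<omega> - m) / a i)) t
       = (\<Prod>i\<in>I. char (distr M borel (\<lambda>\<omega>. Y \<omega> - m)) (t / a i))"
proof -
  have X_rv: "random_variable borel (X i)" if "i \<in> I" for i
    using indep that unfolding indep_vars_def2 by simp
  have "indep_vars (\<lambda>_. borel) (\<lambda>i \<omega>. (\<lambda>x. (x - m) / a i) (X i \<omega>)) I"
    using indep by (rule indep_vars_compose2) simp
  then have "char (distr M borel (\<lambda>\<omega>. \<Sum>i\<in>I. (X i \<omega> - m) / a i)) t
      = (\<Prod>i\<in>I. char (distr M borel (\<lambda>\<omega>. (X i \<omega> - m) / a i)) t)"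
    by (rule char_distr_sum)
  also have "\<dots> = (\<Prod>i\<in>I. char (distr M borel (\<lambda>\<omega>. Y \<omega> - m)) (t / a i))"
  proof (rule prod.cong[OF refl])
    fix i assume i: "i \<in> I"
    have "char (distr M borel (\<lambda>\<omega>. (X i \<omega> - m) / a i)) t
        = (CLINT x|distr M borel (X i). iexp (t * ((x - m) / a i)))"
      unfolding char_def using X_rv[OF i] by (simp add: integral_distr)
    also have "\<dots> = (CLINT x|distr M borel Y. iexp (t / a i * (x - m)))"
      by (simp add: distr_eq[OF i])
    also have "\<dots> = char (distr M borel (\<lambda>\<omega>. Y \<omega> - m)) (t / a i)"
      unfolding char_def using Y_rv by (simp add: integral_distr)
    finally show "char (distr M borel (\<lambda>\<omega>. (X i \<omega> - m) / a i)) t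
        = char (distr M borel (\<lambda>\<omega>. Y \<omega> - m)) (t / a i)" .
  qed
  finally show ?thesis .
qed

lemma (in prob_space) triangle_weighted_sum_law:
  fixes X :: "nat \<Rightarrow> nat \<Rightarrow> 'a \<Rightarrow> real" and m c :: real and n :: nat
  assumes X_indep: "indep_vars (\<lambda>_. borel) (\<lambda>(i, k). X i k) {(i, k). 1 \<le> i \<and> i \<le> k}"
    and Y_rv: "random_variable borel Y"
    and X_distr: "\<And>i k. 1 \<le> i \<Longrightarrow> i \<le> k \<Longrightarrow> distr M borel (X i k) = distr M borel Y"
  defines "S \<equiv> \<lambda>\<omega>. \<Sum>p\<in>triangle n. (X (fst p) (snd p) \<omega> - m) / (real (snd p) * c)"
  shows "real_distribution (distr M borel S)"
    and "char (distr M borel S) t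
           = (\<Prod>k=1..n. char (distr M borel (\<lambda>\<omega>. Y \<omega> - m)) (t / c / real k) ^ k)"
proof -
  have indep: "indep_vars (\<lambda>_. borel) (\<lambda>p. X (fst p) (snd p)) (triangle n)"
    using indep_vars_subset[OF X_indep, of "triangle n"]
    by (auto simp: triangle_def case_prod_beta')
  have "X (fst p) (snd p) \<in> borel_measurable M" if "p \<in> triangle n" for p
    using indep that unfolding indep_vars_def2 by auto
  then have "S \<in> borel_measurable M"
    unfolding S_def by (intro borel_measurable_sum borel_measurable_divide borel_measurable_diff) auto
  then show "real_distribution (distr M borel S)" by simp
  have "char (distr M borel S) t
      = (\<Prod>p\<in>triangle n. char (distr M borel (\<lambda>\<omega>. Y \<omega> - m)) (t / (real (snd p) * c)))"
    unfolding S_def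
    by (rule char_weighted_iid_sum[OF indep Y_rv]) (auto simp: triangle_def X_distr)
  also have "\<dots> = (\<Prod>k=1..n. \<Prod>i=1..k. char (distr M borel (\<lambda>\<omega>. Y \<omega> - m)) (t / (real k * c)))"
    by (rule prod_triangle)
  also have "\<dots> = (\<Prod>k=1..n. char (distr M borel (\<lambda>\<omega>. Y \<omega> - m)) (t / c / real k) ^ k)"
    by (simp add: mult.commute)
  finally show "char (distr M borel S) t
      = (\<Prod>k=1..n. char (distr M borel (\<lambda>\<omega>. Y \<omega> - m)) (t / c / real k) ^ k)" .
qed

context real_distribution
begin

text \<open>The expectation controlling the remainder in the second-order expansion of the
  characteristic function at \<open>s\<close>.\<close>
definition cf_remainder :: "real \<Rightarrow> real" where
  "cf_remainder s = expectation (\<lambda>x. min (6 * x\<^sup>2) (\<bar>s\<bar> * \<bar>x\<bar> ^ 3))"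

lemma cf_remainder_integrable:
  assumes "integrable M (\<lambda>x. x\<^sup>2)"
  shows "integrable M (\<lambda>x. min (6 * x\<^sup>2) (\<bar>s\<bar> * \<bar>x\<bar> ^ 3))"
  by (rule Bochner_Integration.integrable_bound[OF integrable_mult_right[OF assms, of 6]]) auto

text \<open>The remainder grows with \<open>\<bar>s\<bar>\<close>, so one bound at the largest argument covers
  all rescaled factors.\<close>
lemma cf_remainder_mono:
  assumes "integrable M (\<lambda>x. x\<^sup>2)" and "\<bar>s\<bar> \<le> \<bar>s'\<bar>"
  shows "cf_remainder s \<le> cf_remainder s'"
  unfolding cf_remainder_def using assms
  by (intro integral_mono cf_remainder_integrable)
     (auto intro!: min.mono mult_right_mono simp: min_le_iff_disj)

lemma cf_remainder_tendsto_zero: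
  assumes "integrable M (\<lambda>x. x\<^sup>2)" and "s \<longlonglongrightarrow> 0"
  shows "(\<lambda>n. cf_remainder (s n)) \<longlonglongrightarrow> 0"
proof -
  have "(\<lambda>n. min (6 * x\<^sup>2) (\<bar>s n\<bar> * \<bar>x\<bar> ^ 3)) \<longlonglongrightarrow> min (6 * x\<^sup>2) (\<bar>0\<bar> * \<bar>x\<bar> ^ 3)" for x
    by (intro tendsto_intros assms(2))
  then have "(\<lambda>n. cf_remainder (s n)) \<longlonglongrightarrow> expectation (\<lambda>x. 0)"
    unfolding cf_remainder_def using assms(1)
    by (intro integral_dominated_convergence[where w="\<lambda>x. 6 * x\<^sup>2"]) auto
  then show ?thesis by simp
qed

lemma char_gauss_approx:
  assumes "integrable M (\<lambda>x. x)" "integrable M (\<lambda>x. x\<^sup>2)"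
    and mean: "expectation (\<lambda>x. x) = 0" and var: "expectation (\<lambda>x. x\<^sup>2) = \<sigma>2"
  shows "cmod (char M s - complex_of_real (exp (- (s\<^sup>2 * \<sigma>2 / 2))))
    \<le> s\<^sup>2 / 6 * cf_remainder s + (s\<^sup>2 * \<sigma>2 / 2)\<^sup>2"
proof -
  have \<sigma>2_nonneg: "\<sigma>2 \<ge> 0"
    unfolding var[symmetric] by (intro integral_nonneg_AE) auto
  have "variance (\<lambda>x. x) = \<sigma>2"
    using mean var by simp
  then have taylor: "cmod (char M s - (1 - s\<^sup>2 * \<sigma>2 / 2)) \<le> s\<^sup>2 / 6 * cf_remainder s"
    unfolding cf_remainder_def using assms by (intro char_approx3) auto
  have gauss: "cmod (complex_of_real (1 - s\<^sup>2 * \<sigma>2 / 2) - complex_of_real (exp (- (s\<^sup>2 * \<sigma>2 / 2))))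
      \<le> (s\<^sup>2 * \<sigma>2 / 2)\<^sup>2"
    using exp_minus_approx[of "s\<^sup>2 * \<sigma>2 / 2"] \<sigma>2_nonneg
    by (simp only: of_real_diff[symmetric] norm_of_real) simp
  show ?thesis
    by (rule norm_diff_triangle_le[OF taylor gauss])
qed

lemma char_scaled_approx:
  assumes "integrable M (\<lambda>x. x)" "integrable M (\<lambda>x. x\<^sup>2)"
    "expectation (\<lambda>x. x) = 0" "expectation (\<lambda>x. x\<^sup>2) = \<sigma>2"
    and k: "k \<ge> 1"
  shows "cmod (char M (u / k) - complex_of_real (exp (- ((u / k)\<^sup>2 * \<sigma>2 / 2))))
    \<le> (u\<^sup>2 / 6 * cf_remainder u + (u\<^sup>2 * \<sigma>2 / 2)\<^sup>2) / k\<^sup>2"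
proof -
  have R_mono: "cf_remainder (u / k) \<le> cf_remainder u"
    using k assms(2) mult_left_mono[OF k, of "\<bar>u\<bar>"]
    by (intro cf_remainder_mono) (auto simp: abs_divide divide_le_eq)
  have k2: "k\<^sup>2 \<ge> 1" using k by (simp add: one_le_power)
  have "cmod (char M (u / k) - complex_of_real (exp (- ((u / k)\<^sup>2 * \<sigma>2 / 2))))
      \<le> (u / k)\<^sup>2 / 6 * cf_remainder (u / k) + ((u / k)\<^sup>2 * \<sigma>2 / 2)\<^sup>2"
    using assms(1-4) by (rule char_gauss_approx)
  also have "\<dots> = (u\<^sup>2 / 6 * cf_remainder (u / k)) / k\<^sup>2 + (u\<^sup>2 * \<sigma>2 / 2)\<^sup>2 / k\<^sup>2 / k\<^sup>2"
    by (simp add: power_divide field_simps)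
  also have "\<dots> \<le> (u\<^sup>2 / 6 * cf_remainder u) / k\<^sup>2 + (u\<^sup>2 * \<sigma>2 / 2)\<^sup>2 / k\<^sup>2"
  proof (rule add_mono)
    show "u\<^sup>2 / 6 * cf_remainder (u / k) / k\<^sup>2 \<le> u\<^sup>2 / 6 * cf_remainder u / k\<^sup>2"
      using R_mono by (intro divide_right_mono mult_left_mono) auto
    show "(u\<^sup>2 * \<sigma>2 / 2)\<^sup>2 / k\<^sup>2 / k\<^sup>2 \<le> (u\<^sup>2 * \<sigma>2 / 2)\<^sup>2 / k\<^sup>2"
      using k k2 divide_left_mono[of 1 "k\<^sup>2" "(u\<^sup>2 * \<sigma>2 / 2)\<^sup>2 / k\<^sup>2"] by simp
  qed
  finally show ?thesis
    by (simp add: add_divide_distrib)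
qed

text \<open>The product \<open>\<Prod>\<^sub>k \<phi>(u / k)\<^sup>k\<close> is close to a Gaussian factor with exponent
  proportional to \<open>harm n\<close>, since \<open>\<Sum>\<^sub>k k \<cdot> k\<^sup>-\<^sup>2 = harm n\<close>.\<close>
lemma char_harmonic_product_approx:
  assumes "integrable M (\<lambda>x. x)" "integrable M (\<lambda>x. x\<^sup>2)"
    and "expectation (\<lambda>x. x) = 0" and var: "expectation (\<lambda>x. x\<^sup>2) = \<sigma>2"
  shows "cmod ((\<Prod>k=1..n. char M (u / real k) ^ k) - complex_of_real (exp (- (u\<^sup>2 * \<sigma>2 / 2) * harm n)))
    \<le> (u\<^sup>2 / 6 * cf_remainder u + (u\<^sup>2 * \<sigma>2 / 2)\<^sup>2) * harm n"
proof -
  define B where "B = u\<^sup>2 / 6 * cf_remainder u + (u\<^sup>2 * \<sigma>2 / 2)\<^sup>2"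
  define w where "w k = complex_of_real (exp (- ((u / real k)\<^sup>2 * \<sigma>2 / 2)))" for k
  have \<sigma>2_nonneg: "\<sigma>2 \<ge> 0"
    unfolding var[symmetric] by (intro integral_nonneg_AE) auto
  have w_le_1: "norm (w k) \<le> 1" for k
    using \<sigma>2_nonneg by (simp add: w_def)
  have gauss_prod: "complex_of_real (exp (- (u\<^sup>2 * \<sigma>2 / 2) * harm n)) = (\<Prod>k=1..n. w k ^ k)"
  proof -
    have "- (u\<^sup>2 * \<sigma>2 / 2) * harm n = (\<Sum>k=1..n. real k * (- ((u / real k)\<^sup>2 * \<sigma>2 / 2)))"
      by (simp add: harm_def sum_distrib_left power_divide field_simps power2_eq_square)
    then show ?thesis
      by (simp only: w_def exp_sum[OF finite_atLeastAtMost] exp_of_nat_mult of_real_prod of_real_power)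
  qed
  have "cmod ((\<Prod>k=1..n. char M (u / real k) ^ k) - (\<Prod>k=1..n. w k ^ k))
      \<le> (\<Sum>k=1..n. cmod (char M (u / real k) ^ k - w k ^ k))"
    by (rule norm_prod_diff) (auto simp: norm_power power_le_one cmod_char_le_1 w_le_1)
  also have "\<dots> \<le> (\<Sum>k=1..n. real k * (B / (real k)\<^sup>2))"
  proof (rule sum_mono)
    fix k assume "k \<in> {1..n}"
    then have "cmod (char M (u / real k) - w k) \<le> B / (real k)\<^sup>2"
      unfolding w_def B_def using assms by (intro char_scaled_approx) auto
    then show "cmod (char M (u / real k) ^ k - w k ^ k) \<le> real k * (B / (real k)\<^sup>2)"
      by (intro order_trans[OF norm_power_diff] mult_left_mono) (auto simp: cmod_char_le_1 w_le_1)
  qed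
  also have "\<dots> = B * harm n"
    by (simp add: harm_def sum_distrib_left power2_eq_square field_simps)
  finally show ?thesis
    unfolding gauss_prod B_def .
qed

lemma char_log_error_tendsto_zero:
  fixes t :: real
  assumes "integrable M (\<lambda>x. x\<^sup>2)" and \<sigma>2_pos: "\<sigma>2 > 0"
  defines "u \<equiv> \<lambda>n. t / (sqrt \<sigma>2 * sqrt (ln (real n)))"
  shows "(\<lambda>n. ((u n)\<^sup>2 / 6 * cf_remainder (u n) + ((u n)\<^sup>2 * \<sigma>2 / 2)\<^sup>2) * harm n) \<longlonglongrightarrow> 0"
proof -
  have ln_top: "filterlim (\<lambda>n. ln (real n)) at_top sequentially"
    by (rule filterlim_compose[OF ln_at_top filterlim_real_sequentially])
  have "filterlim (\<lambda>n. sqrt \<sigma>2 * sqrt (ln (real n))) at_top sequentially"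
    using \<sigma>2_pos by (intro filterlim_tendsto_pos_mult_at_top[OF tendsto_const]
        filterlim_compose[OF sqrt_at_top ln_top]) auto
  then have u_0: "u \<longlonglongrightarrow> 0"
    unfolding u_def by (rule tendsto_divide_0[OF tendsto_const filterlim_at_top_imp_at_infinity])
  have "(\<lambda>n. (t\<^sup>2 / (6 * \<sigma>2) * cf_remainder (u n) + t ^ 4 / 4 * inverse (ln (real n))) * (harm n / ln (real n)))
      \<longlonglongrightarrow> (t\<^sup>2 / (6 * \<sigma>2) * 0 + t ^ 4 / 4 * 0) * 1"
    using assms(1) u_0
    by (intro tendsto_intros cf_remainder_tendsto_zero harm_over_ln_tendsto
        filterlim_compose[OF tendsto_inverse_0_at_top ln_top] filterlim_ident)
  moreover have "\<forall>\<^sub>F n in sequentially.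
      (t\<^sup>2 / (6 * \<sigma>2) * cf_remainder (u n) + t ^ 4 / 4 * inverse (ln (real n))) * (harm n / ln (real n))
      = ((u n)\<^sup>2 / 6 * cf_remainder (u n) + ((u n)\<^sup>2 * \<sigma>2 / 2)\<^sup>2) * harm n"
  proof (rule eventually_sequentiallyI[of 2])
    fix n :: nat assume "n \<ge> 2"
    then have ln_pos: "ln (real n) > 0" and u2: "(u n)\<^sup>2 = t\<^sup>2 / (\<sigma>2 * ln (real n))"
      using \<sigma>2_pos by (simp_all add: u_def power_divide power_mult_distrib)
    show "(t\<^sup>2 / (6 * \<sigma>2) * cf_remainder (u n) + t ^ 4 / 4 * inverse (ln (real n)))
        * (harm n / ln (real n)) = ((u n)\<^sup>2 / 6 * cf_remainder (u n) + ((u n)\<^sup>2 * \<sigma>2 / 2)\<^sup>2) * harm n"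
      unfolding u2 using \<sigma>2_pos ln_pos
      by (simp add: field_simps power2_eq_square power4_eq_xxxx)
  qed
  ultimately show ?thesis
    by (simp add: Lim_transform_eventually)
qed

lemma char_log_harmonic_tendsto:
  assumes "integrable M (\<lambda>x. x)" "integrable M (\<lambda>x. x\<^sup>2)"
    "expectation (\<lambda>x. x) = 0" "expectation (\<lambda>x. x\<^sup>2) = \<sigma>2"
    and \<sigma>2_pos: "\<sigma>2 > 0"
  shows "(\<lambda>n. \<Prod>k=1..n. char M (t / (sqrt \<sigma>2 * sqrt (ln (real n))) / real k) ^ k)
           \<longlonglongrightarrow> char std_normal_distribution t"
proof -
  define u where "u n = t / (sqrt \<sigma>2 * sqrt (ln (real n)))" for n
  have "(\<lambda>n. complex_of_real (exp (- (t\<^sup>2 / 2) * (harm n / ln (real n)))))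
      \<longlonglongrightarrow> complex_of_real (exp (- (t\<^sup>2 / 2) * 1))"
    by (intro tendsto_intros harm_over_ln_tendsto)
  moreover have "\<forall>\<^sub>F n in sequentially. exp (- (t\<^sup>2 / 2) * (harm n / ln (real n)))
      = exp (- ((u n)\<^sup>2 * \<sigma>2 / 2) * harm n)"
  proof (rule eventually_sequentiallyI[of 2])
    fix n :: nat assume "n \<ge> 2"
    then have "(u n)\<^sup>2 * \<sigma>2 = t\<^sup>2 / ln (real n)"
      using \<sigma>2_pos by (simp add: u_def power_divide power_mult_distrib)
    then show "exp (- (t\<^sup>2 / 2) * (harm n / ln (real n))) = exp (- ((u n)\<^sup>2 * \<sigma>2 / 2) * harm n)"
      by simp
  qed
  ultimately have gauss: "(\<lambda>n. complex_of_real (exp (- ((u n)\<^sup>2 * \<sigma>2 / 2) * harm n)))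
      \<longlonglongrightarrow> char std_normal_distribution t"
    by (simp add: char_std_normal_distribution Lim_transform_eventually)
  have err_0: "(\<lambda>n. ((u n)\<^sup>2 / 6 * cf_remainder (u n) + ((u n)\<^sup>2 * \<sigma>2 / 2)\<^sup>2) * harm n) \<longlonglongrightarrow> 0"
    unfolding u_def by (rule char_log_error_tendsto_zero[OF assms(2) \<sigma>2_pos])
  have "\<forall>n. cmod ((\<Prod>k=1..n. char M (u n / real k) ^ k)
      - complex_of_real (exp (- ((u n)\<^sup>2 * \<sigma>2 / 2) * harm n)))
      \<le> ((u n)\<^sup>2 / 6 * cf_remainder (u n) + ((u n)\<^sup>2 * \<sigma>2 / 2)\<^sup>2) * harm n"
    using assms(1-4) by (intro allI char_harmonic_product_approx)
  then have "(\<lambda>n. (\<Prod>k=1..n. char M (u n / real k) ^ k)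
      - complex_of_real (exp (- ((u n)\<^sup>2 * \<sigma>2 / 2) * harm n))) \<longlonglongrightarrow> 0"
    by (rule Lim_null_comparison[OF always_eventually err_0])
  with gauss show ?thesis
    unfolding u_def by (rule Lim_transform)
qed

end

theorem mainTheorem5:
  fixes M :: "'a measure"
    and Y :: "'a \<Rightarrow> real"
    and X :: "nat \<Rightarrow> nat \<Rightarrow> 'a \<Rightarrow> real"
  assumes "prob_space M"
    and Y_rv: "Y \<in> borel_measurable M"
    and Y_sq: "integrable M (\<lambda>x. (Y x)\<^sup>2)"
    and Y_var_pos: "prob_space.variance M Y > 0"
    and X_indep: "prob_space.indep_vars M (\<lambda>_. borel) (\<lambda>(i, k). X i k) {(i, k). 1 \<le> i \<and> i \<le> k}"
    and X_distr: "\<And>i k. 1 \<le> i \<Longrightarrow> i \<le> k \<Longrightarrow> distr M borel (X i k) = distr M borel Y"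
  shows "weak_conv_m
           (\<lambda>n. distr M borel
              (\<lambda>\<omega>. (\<Sum>k=1..n. (\<Sum>i=1..k. X i k \<omega>) / real k - prob_space.expectation M Y)
                   / (sqrt (prob_space.variance M Y) * sqrt (ln (real n)))))
           std_normal_distribution"
proof -
  interpret P: prob_space M by fact
  define m where "m = P.expectation Y"
  define \<sigma>2 where "\<sigma>2 = P.variance Y"
  define c where "c n = sqrt \<sigma>2 * sqrt (ln (real n))" for n :: nat
  define S where "S n \<omega> = (\<Sum>p\<in>triangle n. (X (fst p) (snd p) \<omega> - m) / (real (snd p) * c n))" for n \<omega>
  note \<nu>_law = P.centered_law_moments[OF Y_rv Y_sq, folded m_def]
  interpret \<nu>: real_distribution "distr M borel (\<lambda>\<omega>. Y \<omega> - m)" by (rule \<nu>_law(1))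
  note S_law = P.triangle_weighted_sum_law[OF X_indep Y_rv X_distr]
  have char_S: "char (distr M borel (S n)) t
      = (\<Prod>k=1..n. char (distr M borel (\<lambda>\<omega>. Y \<omega> - m)) (t / c n / real k) ^ k)" for n t
    unfolding S_def by (rule S_law(2))
  have "weak_conv_m (\<lambda>n. distr M borel (S n)) std_normal_distribution"
  proof (rule levy_continuity)
    show "real_distribution (distr M borel (S n))" for n
      unfolding S_def by (rule S_law(1))
    show "(\<lambda>n. char (distr M borel (S n)) t) \<longlonglongrightarrow> char std_normal_distribution t" for t
      unfolding char_S c_def using \<nu>_law(2-5) Y_var_pos
      by (intro \<nu>.char_log_harmonic_tendsto) (simp_all add: \<sigma>2_def m_def)
  qed (rule real_dist_normal_dist)
  moreover have "S n = (\<lambda>\<omega>. (\<Sum>k=1..n. (\<Sum>i=1..k. X i k \<omega>) / real k - m) / c n)" for n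
    unfolding S_def normalized_sum_triangle ..
  ultimately show ?thesis
    by (simp add: m_def \<sigma>2_def c_def)
qed

end
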